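(* For all $g,g'\in\mathbb R$ and all $p,q\in\Delta_d^{\mathcal S}$, \[ \ell^\Theta_{\mathrm C,\infty}\bigl(\mathcal G_g(p),\mathcal G_{g'}(q)\bigr)\le\ell^\Theta_{\mathrm C,\infty}(p,q)+\Delta^{-1/2}|g-g'|. \]
   Context: Finite state set $\mathcal S=\{1,\dots,m\}$ with a transition matrix $P=(P_{ij})$ (induced by a fixed policy in a finite MDP). $R_{ij}$ is the finite-valued $[0,1]$-valued random one-step reward conditioned on transition $i\to j$; $\nu^{(g)}_{ij}:=\mathrm{Law}(R_{ij}-g)$. $\Theta=\{\theta_1<\dots<\theta_d\}$ with constant stride $\Delta>0$; $\Delta_d$ the probability simplex of $\mathbb R^d$; $\Delta_d^{\mathcal S}$ families $(p_i)_{i\in\mathcal S}$, $p_i\in\Delta_d$. For $u\in\Delta_d$, $\eta^{u,0}:=\sum_ku_k\delta_{\theta_k}$. Categorical projection $\Pi^\Theta_{\mathrm C}$: $\delta_x\mapsto\delta_{\theta_1}$ if $x\le\theta_1$, $\delta_{\theta_d}$ if $x\ge\theta_d$, $\frac{\theta_{k+1}-x}{\Delta}\delta_{\theta_k}+\frac{x-\theta_k}{\Delta}\delta_{\theta_{k+1}}$ if $\theta_k\le x\le\theta_{k+1}$, extended linearly to laws. $\mathcal G_g(p)$ is the unique $q\in\Delta_d^{\mathcal S}$ with $\eta^{q_i,0}=\Pi^\Theta_{\mathrm C}(\sum_jP_{ij}(\nu^{(g)}_{ij}\ast\eta^{p_j,0}))$ for all $i$. Coordinate Cramér metric: $F_u(\theta_k):=\sum_{j\le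 k}u_j$, $\ell^\Theta_{\mathrm C}(u,v)^2:=\Delta\sum_{k=1}^{d-1}(F_u(\theta_k)-F_v(\theta_k))^2$, $\ell^\Theta_{\mathrm C,\infty}(p,q):=\max_i\ell^\Theta_{\mathrm C}(p_i,q_i)$. *)

theory Defs
  imports "HOL-Probability.Probability"
begin

definition atom :: "real \<Rightarrow> real \<Rightarrow> nat \<Rightarrow> real" where
  "atom th1 Dl k = th1 + real (k - 1) * Dl"

definition prob_simplex :: "nat \<Rightarrow> (nat \<Rightarrow> real) set" where
  "prob_simplex d = {u. (\<forall>k\<in>{1..d}. 0 \<le> u k) \<and> (\<Sum>k=1..d. u k) = 1}"

text \<open>Coefficient vector of the categorical projection of the Dirac mass at x:
  Pi(delta_x) = sum_l cat_coef x l * delta_{theta_l}.\<close>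
definition cat_coef :: "real \<Rightarrow> real \<Rightarrow> nat \<Rightarrow> real \<Rightarrow> nat \<Rightarrow> real" where
  "cat_coef th1 Dl d x l =
     (if x \<le> atom th1 Dl 1 then (if l = 1 then 1 else 0)
      else if x \<ge> atom th1 Dl d then (if l = d then 1 else 0)
      else (let k = nat \<lfloor>(x - th1) / Dl\<rfloor> + 1 in
            if l = k then (atom th1 Dl (k+1) - x) / Dl
            else if l = k + 1 then (x - atom th1 Dl k) / Dl
            else 0))"

text \<open>The categorical distributional Bellman-type operator G_g, obtained by extending
  the projection linearly to the law sum_j P_ij (Law(R_ij - g) * eta^{p_j,0}),
  where R i j is the (finitely supported) law of the reward R_ij.\<close>
definition G_op :: "real \<Rightarrow> real \<Rightarrow> nat \<Rightarrow> ('s::finite \<Rightarrow> 's \<Rightarrow> real) \<Rightarrow> ('s \<Rightarrow> 's \<Rightarrow> real pmf)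
     \<Rightarrow> real \<Rightarrow> ('s \<Rightarrow> nat \<Rightarrow> real) \<Rightarrow> 's \<Rightarrow> nat \<Rightarrow> real" where
  "G_op th1 Dl d P R g p i l =
     (\<Sum>j\<in>UNIV. P i j * (\<Sum>r\<in>set_pmf (R i j). pmf (R i j) r *
        (\<Sum>k=1..d. p j k * cat_coef th1 Dl d (r - g + atom th1 Dl k) l)))"

definition cdf_vec :: "(nat \<Rightarrow> real) \<Rightarrow> nat \<Rightarrow> real" where
  "cdf_vec u k = (\<Sum>j=1..k. u j)"

definition cramer :: "real \<Rightarrow> nat \<Rightarrow> (nat \<Rightarrow> real) \<Rightarrow> (nat \<Rightarrow> real) \<Rightarrow> real" where
  "cramer Dl d u v = sqrt (Dl * (\<Sum>k=1..d-1. (cdf_vec u k - cdf_vec v k)^2))"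

definition cramer_inf :: "real \<Rightarrow> nat \<Rightarrow> ('s::finite \<Rightarrow> nat \<Rightarrow> real) \<Rightarrow> ('s \<Rightarrow> nat \<Rightarrow> real) \<Rightarrow> real" where
  "cramer_inf Dl d p q = Max (range (\<lambda>i. cramer Dl d (p i) (q i)))"

end

theory Submission
  imports Defs
begin

text \<open>The CDF of \<open>\<Pi>\<^sub>C \<delta>\<^sub>x\<close> at \<open>\<theta>\<^sub>k\<close> is the clamped affine function
  \<open>clamp01 (k - (x - \<theta>\<^sub>1) / \<Delta>)\<close>, so the CDF of \<open>\<G>\<^sub>g(p)\<^sub>i\<close> is a mixture, over the
  successor \<open>j\<close> and the reward \<open>r\<close>, of the vectors
  \<open>k \<mapsto> \<Sum>\<^sub>m p\<^sub>j\<^sub>m clamp01 (k - (r - g + \<theta>\<^sub>m - \<theta>\<^sub>1) / \<Delta>)\<close>, and by Jensen the squared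
  \<open>\<ell>\<^sup>2\<close> norm of a mixture is at most that of its worst component.
  Split \<open>\<G>\<^sub>g(p) - \<G>\<^sub>g\<^sub>'(q)\<close> as \<open>(\<G>\<^sub>g(p) - \<G>\<^sub>g(q)) + (\<G>\<^sub>g(q) - \<G>\<^sub>g\<^sub>'(q))\<close>.
  For the first part, summation by parts turns each component into a matrix applied to
  \<open>F\<^sub>p - F\<^sub>q\<close>; its entries are nonnegative and its row and column sums telescope to at most 1,
  so Schur's test makes it nonexpansive. For the second part, shifting \<open>x\<close> by \<open>\<delta>\<close> moves every
  clamped coordinate in the same direction by at most \<open>|\<delta>|/\<Delta>\<close>, and the moves add up to at most
  \<open>|\<delta>|/\<Delta>\<close>, so their squares add up to at most \<open>(\<delta>/\<Delta>)\<^sup>2\<close>.\<close>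

lemma square_weighted_sum_le:
  fixes w x :: "'a \<Rightarrow> real"
  assumes w_nonneg: "\<And>a. a \<in> A \<Longrightarrow> 0 \<le> w a" and w_sum: "(\<Sum>a\<in>A. w a) \<le> 1"
  shows "(\<Sum>a\<in>A. w a * x a)\<^sup>2 \<le> (\<Sum>a\<in>A. w a * (x a)\<^sup>2)"
proof -
  have "(\<Sum>a\<in>A. w a * x a)\<^sup>2 = (\<Sum>a\<in>A. sqrt (w a) * (sqrt (w a) * x a))\<^sup>2"
    using w_nonneg by (simp add: mult.assoc[symmetric])
  also have "\<dots> \<le> (\<Sum>a\<in>A. (sqrt (w a))\<^sup>2) * (\<Sum>a\<in>A. (sqrt (w a) * x a)\<^sup>2)"
    by (rule Cauchy_Schwarz_ineq_sum)
  also have "\<dots> = (\<Sum>a\<in>A. w a) * (\<Sum>a\<in>A. w a * (x a)\<^sup>2)"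
    using w_nonneg by (simp add: power_mult_distrib)
  also have "\<dots> \<le> (\<Sum>a\<in>A. w a * (x a)\<^sup>2)"
    using w_nonneg w_sum by (intro mult_left_le_one_le sum_nonneg) auto
  finally show ?thesis .
qed

lemma schur_test_sum_squares:
  fixes w :: "'k \<Rightarrow> 'm \<Rightarrow> real"
  assumes "\<And>k m. k \<in> K \<Longrightarrow> m \<in> M \<Longrightarrow> 0 \<le> w k m"
    and "\<And>k. k \<in> K \<Longrightarrow> (\<Sum>m\<in>M. w k m) \<le> 1"
    and "\<And>m. m \<in> M \<Longrightarrow> (\<Sum>k\<in>K. w k m) \<le> 1"
  shows "(\<Sum>k\<in>K. (\<Sum>m\<in>M. w k m * x m)\<^sup>2) \<le> (\<Sum>m\<in>M. (x m)\<^sup>2)"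
proof -
  have "(\<Sum>k\<in>K. (\<Sum>m\<in>M. w k m * x m)\<^sup>2) \<le> (\<Sum>k\<in>K. \<Sum>m\<in>M. w k m * (x m)\<^sup>2)"
    by (intro sum_mono square_weighted_sum_le) (use assms in auto)
  also have "\<dots> = (\<Sum>m\<in>M. (\<Sum>k\<in>K. w k m) * (x m)\<^sup>2)"
    by (subst sum.swap) (simp add: sum_distrib_right)
  also have "\<dots> \<le> (\<Sum>m\<in>M. 1 * (x m)\<^sup>2)"
    using assms(3) by (intro sum_mono mult_right_mono) auto
  finally show ?thesis by simp
qed

lemma sum_squares_convex_comb_le:
  fixes w :: "'a \<Rightarrow> real" and x :: "'a \<Rightarrow> 'k \<Rightarrow> real"
  assumes "\<And>a. a \<in> A \<Longrightarrow> 0 \<le> w a" and "(\<Sum>a\<in>A. w a) = 1"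
    and "\<And>a. a \<in> A \<Longrightarrow> (\<Sum>k\<in>K. (x a k)\<^sup>2) \<le> C"
  shows "(\<Sum>k\<in>K. (\<Sum>a\<in>A. w a * x a k)\<^sup>2) \<le> C"
proof -
  have "(\<Sum>k\<in>K. (\<Sum>a\<in>A. w a * x a k)\<^sup>2) \<le> (\<Sum>k\<in>K. \<Sum>a\<in>A. w a * (x a k)\<^sup>2)"
    by (intro sum_mono square_weighted_sum_le) (use assms in auto)
  also have "\<dots> = (\<Sum>a\<in>A. w a * (\<Sum>k\<in>K. (x a k)\<^sup>2))"
    by (subst sum.swap) (simp add: sum_distrib_left)
  also have "\<dots> \<le> (\<Sum>a\<in>A. w a * C)"
    by (intro sum_mono mult_left_mono) (use assms in auto)
  also have "\<dots> = C"
    using assms(2) by (simp flip: sum_distrib_right)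
  finally show ?thesis .
qed

lemma sum_squares_pmf_mixture_le:
  fixes w :: "'j \<Rightarrow> real" and R :: "'j \<Rightarrow> 'r pmf" and x :: "'j \<Rightarrow> 'r \<Rightarrow> 'k \<Rightarrow> real"
  assumes "\<And>j. j \<in> J \<Longrightarrow> 0 \<le> w j" and "(\<Sum>j\<in>J. w j) = 1"
    and "\<And>j. j \<in> J \<Longrightarrow> finite (set_pmf (R j))"
    and "\<And>j r. j \<in> J \<Longrightarrow> r \<in> set_pmf (R j) \<Longrightarrow> (\<Sum>k\<in>K. (x j r k)\<^sup>2) \<le> C"
  shows "(\<Sum>k\<in>K. (\<Sum>j\<in>J. w j * (\<Sum>r\<in>set_pmf (R j). pmf (R j) r * x j r k))\<^sup>2) \<le> C"
proof (rule sum_squares_convex_comb_le)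
  fix j assume j: "j \<in> J"
  have "(\<Sum>r\<in>set_pmf (R j). pmf (R j) r) = 1"
    using assms(3)[OF j] by (rule sum_pmf_eq_1) simp
  then show "(\<Sum>k\<in>K. (\<Sum>r\<in>set_pmf (R j). pmf (R j) r * x j r k)\<^sup>2) \<le> C"
    by (intro sum_squares_convex_comb_le) (use assms j in auto)
qed (use assms in auto)

lemma summation_by_parts:
  fixes c f :: "nat \<Rightarrow> 'a::comm_ring"
  shows "(\<Sum>m=1..n. c m * f m)
    = (\<Sum>m=1..n-1. (\<Sum>l=1..m. c l) * (f m - f (Suc m))) + (\<Sum>l=1..n. c l) * f n"
proof (induction n)
  case (Suc n)
  show ?case
  proof (cases n)
    case (Suc n')
    then have "{1..Suc n - 1} = insert n {1..n - 1}" by auto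
    then show ?thesis using Suc.IH Suc by (simp add: algebra_simps)
  qed simp
qed simp

definition clamp01 :: "real \<Rightarrow> real" where
  "clamp01 z = max 0 (min 1 z)"

lemma clamp01_mono: "a \<le> b \<Longrightarrow> clamp01 a \<le> clamp01 b"
  by (auto simp: clamp01_def)

lemma clamp01_diff_le: "a \<le> b \<Longrightarrow> clamp01 b - clamp01 a \<le> b - a"
  by (auto simp: clamp01_def)

lemma clamp01_bounds: "0 \<le> clamp01 a" "clamp01 a \<le> 1"
  by (auto simp: clamp01_def)

lemma sum_clamp01_shifts:
  "(\<Sum>k=1..n. clamp01 (real k - u)) = max 0 (min (real n) (real n - u))"
  by (induction n) (auto simp: clamp01_def max_def min_def)

lemma sum_clamp01_unit_shift_diff_le:
  "(\<Sum>k=1..n. clamp01 (real k - u) - clamp01 (real k - (u + 1))) \<le> 1"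
  unfolding sum_subtractf sum_clamp01_shifts by (auto simp: max_def min_def)

lemma sum_squares_clamp01_shift_diff_le:
  "(\<Sum>k=1..n. (clamp01 (real k - u) - clamp01 (real k - v))\<^sup>2) \<le> (u - v)\<^sup>2"
proof (induction u v rule: linorder_wlog)
  case (le u v)
  define x where "x k = clamp01 (real k - u) - clamp01 (real k - v)" for k
  have x_bounds: "0 \<le> x k" "x k \<le> v - u" for k
    using clamp01_mono[of "real k - v" "real k - u"] clamp01_diff_le[of "real k - v" "real k - u"] le
    by (auto simp: x_def)
  have "(\<Sum>k=1..n. (x k)\<^sup>2) \<le> (\<Sum>k=1..n. x k * (v - u))"
    unfolding power2_eq_square by (intro sum_mono mult_left_mono) (use x_bounds in auto)
  also have "\<dots> = (\<Sum>k=1..n. x k) * (v - u)"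
    by (simp add: sum_distrib_right)
  also have "\<dots> \<le> (v - u) * (v - u)"
  proof (intro mult_right_mono)
    show "(\<Sum>k=1..n. x k) \<le> v - u"
      unfolding x_def sum_subtractf sum_clamp01_shifts using le by (auto simp: max_def min_def)
  qed (use le in simp)
  finally show ?case by (simp add: x_def power2_eq_square algebra_simps)
qed (simp add: power2_commute)

definition proj_cdf :: "real \<Rightarrow> real \<Rightarrow> nat \<Rightarrow> real \<Rightarrow> real" where
  "proj_cdf th1 Dl k x = clamp01 (real k - (x - th1) / Dl)"

lemma proj_cdf_antimono: "Dl > 0 \<Longrightarrow> x \<le> y \<Longrightarrow> proj_cdf th1 Dl k y \<le> proj_cdf th1 Dl k x"
  unfolding proj_cdf_def by (intro clamp01_mono diff_left_mono divide_right_mono) auto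

lemma atom_Suc: "1 \<le> m \<Longrightarrow> atom th1 Dl (Suc m) = atom th1 Dl m + Dl"
  unfolding atom_def by (cases m) (auto simp: algebra_simps)

lemma sum_cat_coef_interior:
  assumes Dl: "Dl > 0" and x: "atom th1 Dl 1 < x" "x < atom th1 Dl d"
  shows "(\<Sum>l=1..k. cat_coef th1 Dl d x l) = proj_cdf th1 Dl k x"
proof -
  define t where "t = (x - th1) / Dl"
  define m where "m = nat \<lfloor>t\<rfloor> + 1"
  have "0 < t" using x Dl by (simp add: t_def atom_def)
  then have m: "real m - 1 \<le> t" "t < real m" "1 \<le> m"
    by (auto simp: m_def of_nat_nat) linarith+
  have upper: "(atom th1 Dl (m + 1) - x) / Dl = real m - t"
    unfolding atom_def t_def using Dl by (simp add: field_simps)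
  have lower: "(x - atom th1 Dl m) / Dl = t - (real m - 1)"
    unfolding atom_def t_def using Dl m(3) by (simp add: field_simps of_nat_diff)
  have coef: "cat_coef th1 Dl d x l
      = (if l = m then real m - t else 0) + (if l = Suc m then t - (real m - 1) else 0)" for l
    using x upper lower by (auto simp: cat_coef_def Let_def m_def t_def)
  have "(\<Sum>l=1..k. cat_coef th1 Dl d x l)
      = (if m \<le> k then real m - t else 0) + (if Suc m \<le> k then t - (real m - 1) else 0)"
    using m(3) by (simp add: coef sum.distrib)
  also have "\<dots> = clamp01 (real k - t)"
  proof -
    consider "k < m" | "k = m" | "Suc m \<le> k" by linarith
    then show ?thesis
    proof cases
      case 1
      then have "real k \<le> real m - 1" by linarith
      then show ?thesis using 1 m by (auto simp: clamp01_def)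
    next
      case 3
      then have "real m + 1 \<le> real k" by linarith
      then show ?thesis using 3 m by (auto simp: clamp01_def)
    qed (use m in \<open>auto simp: clamp01_def\<close>)
  qed
  finally show ?thesis by (simp add: proj_cdf_def t_def)
qed

lemma sum_cat_coef:
  assumes Dl: "Dl > 0" and k: "1 \<le> k" "k < d"
  shows "(\<Sum>l=1..k. cat_coef th1 Dl d x l) = proj_cdf th1 Dl k x"
proof -
  consider "x \<le> atom th1 Dl 1" | "atom th1 Dl d \<le> x" | "atom th1 Dl 1 < x" "x < atom th1 Dl d"
    by linarith
  then show ?thesis
  proof cases
    case 1
    then have "(x - th1) / Dl \<le> 0" using Dl by (simp add: atom_def divide_nonpos_pos)
    moreover have "(\<Sum>l=1..k. cat_coef th1 Dl d x l) = (\<Sum>l=1..k. if l = 1 then 1 else 0)"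
      using 1 by (intro sum.cong) (auto simp: cat_coef_def)
    ultimately show ?thesis using k by (simp add: proj_cdf_def clamp01_def)
  next
    case 2
    have "atom th1 Dl 1 < atom th1 Dl d" using Dl k by (simp add: atom_def)
    with 2 have "atom th1 Dl 1 < x" by linarith
    from 2 have "real (d - 1) \<le> (x - th1) / Dl" using Dl by (simp add: atom_def field_simps)
    then have "real k \<le> (x - th1) / Dl" using k by linarith
    moreover have "(\<Sum>l=1..k. cat_coef th1 Dl d x l) = 0"
      using 2 \<open>atom th1 Dl 1 < x\<close> k by (intro sum.neutral) (auto simp: cat_coef_def)
    ultimately show ?thesis by (simp add: proj_cdf_def clamp01_def)
  qed (rule sum_cat_coef_interior[OF Dl])
qed

lemma sum_swap_mult_left:
  fixes c :: "'j \<Rightarrow> 'a::comm_semiring_0"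
  shows "(\<Sum>l\<in>L. \<Sum>j\<in>J. c j * y j l) = (\<Sum>j\<in>J. c j * (\<Sum>l\<in>L. y j l))"
  by (simp add: sum_distrib_left) (rule sum.swap)

lemma cdf_G_op:
  assumes "Dl > 0" and k: "k \<in> {1..d-1}"
  shows "cdf_vec (G_op th1 Dl d P R g p i) k =
    (\<Sum>j\<in>UNIV. P i j * (\<Sum>r\<in>set_pmf (R i j). pmf (R i j) r *
        (\<Sum>m=1..d. p j m * proj_cdf th1 Dl k (r - g + atom th1 Dl m))))"
proof -
  from k have "1 \<le> k" "k < d" by auto
  then show ?thesis
    unfolding cdf_vec_def G_op_def by (simp only: sum_swap_mult_left sum_cat_coef[OF assms(1)])
qed

lemma sum_squares_proj_cdf_shift_le:
  "(\<Sum>k=1..n. (proj_cdf th1 Dl k x - proj_cdf th1 Dl k y)\<^sup>2) \<le> ((x - y) / Dl)\<^sup>2"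
  using sum_squares_clamp01_shift_diff_le[where u = "(x - th1) / Dl" and v = "(y - th1) / Dl" and n = n]
  by (simp add: proj_cdf_def diff_divide_distrib)

lemma sum_squares_proj_cdf_comb_le:
  assumes Dl: "Dl > 0" and mass: "cdf_vec u d = cdf_vec v d"
  shows "(\<Sum>k=1..d-1. (\<Sum>m=1..d. (u m - v m) * proj_cdf th1 Dl k (s + atom th1 Dl m))\<^sup>2)
       \<le> (\<Sum>k=1..d-1. (cdf_vec u k - cdf_vec v k)\<^sup>2)"
proof -
  define F where "F k m = proj_cdf th1 Dl k (s + atom th1 Dl m)" for k m
  define w where "w k m = F k m - F k (Suc m)" for k m
  have "(\<Sum>m=1..d. (u m - v m) * F k m) = (\<Sum>m=1..d-1. w k m * (cdf_vec u m - cdf_vec v m))" for k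
    using summation_by_parts[of "\<lambda>m. u m - v m" "F k" d] mass
    by (simp add: w_def cdf_vec_def sum_subtractf mult.commute)
  moreover have "(\<Sum>k=1..d-1. (\<Sum>m=1..d-1. w k m * (cdf_vec u m - cdf_vec v m))\<^sup>2)
      \<le> (\<Sum>m=1..d-1. (cdf_vec u m - cdf_vec v m)\<^sup>2)"
  proof (rule schur_test_sum_squares)
    fix k m assume "m \<in> {1..d-1}"
    then show "0 \<le> w k m"
      unfolding w_def F_def using proj_cdf_antimono[OF Dl] atom_Suc[of m th1 Dl] Dl by simp
  next
    fix k
    have "(\<Sum>m=1..d-1. w k m) = F k 1 - F k (Suc (d - 1))"
      using sum_Suc_diff[of 1 "d - 1" "\<lambda>m. - F k m"] by (simp add: w_def)
    moreover have "F k 1 \<le> 1" "0 \<le> F k (Suc (d - 1))"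
      by (simp_all add: F_def proj_cdf_def clamp01_bounds)
    ultimately show "(\<Sum>m=1..d-1. w k m) \<le> 1" by linarith
  next
    fix m assume m: "m \<in> {1..d-1}"
    define t where "t = (s + atom th1 Dl m - th1) / Dl"
    have "(s + atom th1 Dl (Suc m) - th1) / Dl = t + 1"
      using m Dl atom_Suc[of m th1 Dl] unfolding t_def by (simp add: field_simps)
    then have "(\<Sum>k=1..d-1. w k m) = (\<Sum>k=1..d-1. clamp01 (real k - t) - clamp01 (real k - (t + 1)))"
      by (simp add: w_def F_def proj_cdf_def t_def)
    then show "(\<Sum>k=1..d-1. w k m) \<le> 1"
      using sum_clamp01_unit_shift_diff_le by simp
  qed
  ultimately show ?thesis by (simp add: F_def)
qed

lemma cdf_vec_prob_simplex: "u \<in> prob_simplex d \<Longrightarrow> cdf_vec u d = 1"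
  by (simp add: prob_simplex_def cdf_vec_def)

lemma cramer_nonneg: "0 \<le> Dl \<Longrightarrow> 0 \<le> cramer Dl d u v"
  unfolding cramer_def by (simp add: sum_nonneg)

lemma cramer_le_iff:
  assumes "Dl > 0" "0 \<le> C"
  shows "cramer Dl d u v \<le> C \<longleftrightarrow> (\<Sum>k=1..d-1. (cdf_vec u k - cdf_vec v k)\<^sup>2) \<le> C\<^sup>2 / Dl"
  unfolding cramer_def using assms
  by (auto simp: pos_le_divide_eq mult.commute intro: real_le_lsqrt dest: sqrt_le_D)

lemma cramer_triangle:
  assumes "0 \<le> Dl"
  shows "cramer Dl d u w \<le> cramer Dl d u v + cramer Dl d v w"
proof -
  have L2: "cramer Dl d u v = sqrt Dl * L2_set (\<lambda>k. cdf_vec u k - cdf_vec v k) {1..d-1}" for u v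
    unfolding cramer_def L2_set_def by (simp add: real_sqrt_mult)
  have "L2_set (\<lambda>k. cdf_vec u k - cdf_vec w k) {1..d-1}
      \<le> L2_set (\<lambda>k. cdf_vec u k - cdf_vec v k) {1..d-1} + L2_set (\<lambda>k. cdf_vec v k - cdf_vec w k) {1..d-1}"
    using L2_set_triangle_ineq[of "\<lambda>k. cdf_vec u k - cdf_vec v k" "\<lambda>k. cdf_vec v k - cdf_vec w k"]
    by simp
  then show ?thesis
    unfolding L2 using assms by (simp add: mult_left_mono flip: distrib_left)
qed

lemma cramer_le_cramer_inf: "cramer Dl d (p i) (q i) \<le> cramer_inf Dl d p q"
  unfolding cramer_inf_def by (rule Max_ge) auto

lemma cdf_G_op_diff:
  assumes "Dl > 0" "k \<in> {1..d-1}"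
  shows "cdf_vec (G_op th1 Dl d P R g p i) k - cdf_vec (G_op th1 Dl d P R g' q i) k =
    (\<Sum>j\<in>UNIV. P i j * (\<Sum>r\<in>set_pmf (R i j). pmf (R i j) r *
        (\<Sum>m=1..d. p j m * proj_cdf th1 Dl k (r - g + atom th1 Dl m)
                   - q j m * proj_cdf th1 Dl k (r - g' + atom th1 Dl m))))"
  unfolding cdf_G_op[OF assms] by (simp add: right_diff_distrib sum_subtractf)

lemma cramer_G_op_le_cramer_inf:
  fixes P :: "'s::finite \<Rightarrow> 's \<Rightarrow> real"
  assumes Dl: "Dl > 0"
    and P_nonneg: "\<And>j. 0 \<le> P i j" and P_stoch: "(\<Sum>j\<in>UNIV. P i j) = 1"
    and R_fin: "\<And>j. finite (set_pmf (R i j))"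
    and mass: "\<And>j. cdf_vec (p j) d = cdf_vec (q j) d"
  shows "cramer Dl d (G_op th1 Dl d P R g p i) (G_op th1 Dl d P R g q i) \<le> cramer_inf Dl d p q"
proof -
  let ?C = "cramer_inf Dl d p q"
  have C_nonneg: "0 \<le> ?C"
    using cramer_nonneg[of Dl] cramer_le_cramer_inf Dl by (meson less_imp_le order_trans)
  have bound: "(\<Sum>k=1..d-1. (\<Sum>m=1..d. (p j m - q j m) * proj_cdf th1 Dl k (r - g + atom th1 Dl m))\<^sup>2)
      \<le> ?C\<^sup>2 / Dl" for j r
    using sum_squares_proj_cdf_comb_le[OF Dl mass] cramer_le_cramer_inf[of Dl d p j q]
    unfolding cramer_le_iff[OF Dl C_nonneg] by (rule order_trans)
  have "(\<Sum>k=1..d-1. (cdf_vec (G_op th1 Dl d P R g p i) k - cdf_vec (G_op th1 Dl d P R g q i) k)\<^sup>2)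
      = (\<Sum>k=1..d-1. (\<Sum>j\<in>UNIV. P i j * (\<Sum>r\<in>set_pmf (R i j). pmf (R i j) r *
          (\<Sum>m=1..d. (p j m - q j m) * proj_cdf th1 Dl k (r - g + atom th1 Dl m))))\<^sup>2)"
    using Dl by (intro sum.cong refl) (simp add: cdf_G_op_diff left_diff_distrib)
  also have "\<dots> \<le> ?C\<^sup>2 / Dl"
    by (rule sum_squares_pmf_mixture_le) (use P_nonneg P_stoch R_fin bound in auto)
  finally show ?thesis
    unfolding cramer_le_iff[OF Dl C_nonneg] .
qed

lemma cramer_G_op_shift_le:
  fixes P :: "'s::finite \<Rightarrow> 's \<Rightarrow> real"
  assumes Dl: "Dl > 0"
    and P_nonneg: "\<And>j. 0 \<le> P i j" and P_stoch: "(\<Sum>j\<in>UNIV. P i j) = 1"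
    and R_fin: "\<And>j. finite (set_pmf (R i j))"
    and q_simp: "\<And>j. q j \<in> prob_simplex d"
  shows "cramer Dl d (G_op th1 Dl d P R g q i) (G_op th1 Dl d P R g' q i) \<le> \<bar>g - g'\<bar> / sqrt Dl"
proof -
  have C_nonneg: "0 \<le> \<bar>g - g'\<bar> / sqrt Dl" using Dl by simp
  have bound: "(\<Sum>k=1..d-1. (\<Sum>m=1..d. q j m * (proj_cdf th1 Dl k (r - g + atom th1 Dl m)
      - proj_cdf th1 Dl k (r - g' + atom th1 Dl m)))\<^sup>2) \<le> ((g - g') / Dl)\<^sup>2" for j r
  proof (rule sum_squares_convex_comb_le)
    fix m
    show "(\<Sum>k=1..d-1. (proj_cdf th1 Dl k (r - g + atom th1 Dl m)
        - proj_cdf th1 Dl k (r - g' + atom th1 Dl m))\<^sup>2) \<le> ((g - g') / Dl)\<^sup>2"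
      using sum_squares_proj_cdf_shift_le[of th1 Dl "r - g + atom th1 Dl m" "r - g' + atom th1 Dl m"]
      by (simp add: power_divide power2_commute)
  qed (use q_simp[of j] in \<open>auto simp: prob_simplex_def\<close>)
  have "(\<Sum>k=1..d-1. (cdf_vec (G_op th1 Dl d P R g q i) k - cdf_vec (G_op th1 Dl d P R g' q i) k)\<^sup>2)
      = (\<Sum>k=1..d-1. (\<Sum>j\<in>UNIV. P i j * (\<Sum>r\<in>set_pmf (R i j). pmf (R i j) r *
          (\<Sum>m=1..d. q j m * (proj_cdf th1 Dl k (r - g + atom th1 Dl m)
                             - proj_cdf th1 Dl k (r - g' + atom th1 Dl m)))))\<^sup>2)"
    using Dl by (intro sum.cong refl) (simp add: cdf_G_op_diff right_diff_distrib)
  also have "\<dots> \<le> ((g - g') / Dl)\<^sup>2"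
    by (rule sum_squares_pmf_mixture_le) (use P_nonneg P_stoch R_fin bound in auto)
  also have "\<dots> = (\<bar>g - g'\<bar> / sqrt Dl)\<^sup>2 / Dl"
    using Dl by (simp add: power_divide power2_eq_square)
  finally show ?thesis
    unfolding cramer_le_iff[OF Dl C_nonneg] .
qed

theorem lemma7:
  fixes th1 Dl :: real and d :: nat
    and P :: "'s::finite \<Rightarrow> 's \<Rightarrow> real" and R :: "'s \<Rightarrow> 's \<Rightarrow> real pmf"
    and g g' :: real and p q :: "'s \<Rightarrow> nat \<Rightarrow> real"
  assumes Dl_pos: "Dl > 0"
    and P_nonneg: "\<And>i j. P i j \<ge> 0"
    and P_stoch: "\<And>i. (\<Sum>j\<in>UNIV. P i j) = 1"
    and R_fin: "\<And>i j. finite (set_pmf (R i j))"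
    and R_range: "\<And>i j. set_pmf (R i j) \<subseteq> {0..1}"
    and p_simp: "\<And>i. p i \<in> prob_simplex d"
    and q_simp: "\<And>i. q i \<in> prob_simplex d"
  shows "cramer_inf Dl d (G_op th1 Dl d P R g p) (G_op th1 Dl d P R g' q)
           \<le> cramer_inf Dl d p q + \<bar>g - g'\<bar> / sqrt Dl"
proof -
  have "cramer Dl d (G_op th1 Dl d P R g p i) (G_op th1 Dl d P R g' q i)
      \<le> cramer_inf Dl d p q + \<bar>g - g'\<bar> / sqrt Dl" for i
  proof -
    have "cramer Dl d (G_op th1 Dl d P R g p i) (G_op th1 Dl d P R g' q i)
        \<le> cramer Dl d (G_op th1 Dl d P R g p i) (G_op th1 Dl d P R g q i)
          + cramer Dl d (G_op th1 Dl d P R g q i) (G_op th1 Dl d P R g' q i)"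
      using Dl_pos by (intro cramer_triangle) simp
    also have "\<dots> \<le> cramer_inf Dl d p q + \<bar>g - g'\<bar> / sqrt Dl"
      using p_simp q_simp
      by (intro add_mono cramer_G_op_le_cramer_inf cramer_G_op_shift_le)
        (simp_all add: Dl_pos P_nonneg P_stoch R_fin cdf_vec_prob_simplex)
    finally show ?thesis .
  qed
  then show ?thesis
    unfolding cramer_inf_def[of Dl d "G_op th1 Dl d P R g p"] by (intro Max.boundedI) auto
qed

end
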